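(* Let $\Phi(r)=U'(r)/(1+U(r))$ for $r\ge0$. There exist positive numbers $T_-<T_+$ and $\Phi_0$ such that $\Phi$ is an increasing diffeomorphism from $(0,T_-)$ onto $(0,\Phi_0)$, a decreasing diffeomorphism from $(T_+,\infty)$ onto $(0,\Phi_0)$, and $\Phi^{-1}((0,\Phi_0))=(0,T_-)\cup(T_+,\infty)$. Moreover $\Phi(r)\sim\frac{2r}{15\pi}$ as $r\to0$ and $\Phi(r)\sim\frac{1}{r\log r}$ as $r\to\infty$.
   Context: $U(r)=\frac{r^2}{4\pi}\int_0^1\frac{z^2-z^4/3}{1+r^2(1-z^2)/4}dz$ for $r\ge0$. *)

theory Defs
  imports "HOL-Analysis.Analysis" "HOL-Library.Landau_Symbols"
begin

definition U :: "real \<Rightarrow> real" where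
  "U r = r^2 / (4*pi) * integral {0..1} (\<lambda>z. (z^2 - z^4/3) / (1 + r^2 * (1 - z^2) / 4))"

definition Phi :: "real \<Rightarrow> real" where
  "Phi r = deriv U r / (1 + U r)"

definition diffeo_onto :: "(real \<Rightarrow> real) \<Rightarrow> real set \<Rightarrow> real set \<Rightarrow> bool" where
  "diffeo_onto f A B \<longleftrightarrow> bij_betw f A B \<and> f C1_differentiable_on A
     \<and> the_inv_into A f C1_differentiable_on B"

end

theory Submission
  imports Defs "HOL-Real_Asymp.Real_Asymp"
begin

text \<open>The integral defining \<open>U\<close> can be evaluated in closed form.  With \<open>s = \<surd>(4 + r\<^sup>2)\<close> and
  \<open>a = arsinh (r / 2)\<close> one has, for \<open>r > 0\<close>,
    \<open>U r = (1/9 + (2r\<^sup>2 - 4)(s a - r) / (3 r\<^sup>3)) / \<pi>\<close>,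
    \<open>U' r = 2 \<kappa>(r) / (3 \<pi> r\<^sup>4 s)\<close> with \<open>\<kappa>(r) = 24 a - 6 r s + r\<^sup>3 s\<close>,
  and an explicit \<open>U''\<close>.  Thus \<open>\<Phi>\<close> is an explicit elementary function on \<open>(0, \<infinity>)\<close>:
  it is positive there because \<open>\<kappa>(0) = 0\<close> and \<open>\<kappa>' = 4 r\<^sup>4 / s > 0\<close>, the method real_asymp
  computes its asymptotics at \<open>0\<close> and at \<open>\<infinity>\<close>, and from the limits of \<open>U, U', U''\<close> one reads off
  \<open>\<Phi>' > 0\<close> near \<open>0\<close> and \<open>\<Phi>' < 0\<close> near \<open>\<infinity>\<close>.  Moreover \<open>\<Phi> 0 = 0\<close> since \<open>0 \<le> U r \<le> r\<^sup>2 / (4\<pi>)\<close>.\<close>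

text \<open>A bijection between an open set of reals and its image, with a continuous and nowhere
  vanishing derivative, is a C1 diffeomorphism: by invariance of domain the image is open and
  the inverse continuous, and the inverse then has the continuous derivative 1 / f' (g y).\<close>
lemma diffeo_onto_if_deriv_nonzero:
  fixes f f' :: "real \<Rightarrow> real"
  assumes I: "open I" and bij: "bij_betw f I J"
    and der: "\<And>x. x \<in> I \<Longrightarrow> (f has_real_derivative f' x) (at x)"
    and cont_f': "continuous_on I f'"
    and nz: "\<And>x. x \<in> I \<Longrightarrow> f' x \<noteq> 0"
  shows "diffeo_onto f I J"
proof -
  define g where "g = the_inv_into I f"
  have inj: "inj_on f I" and fI: "f ` I = J" using bij by (auto simp: bij_betw_def)
  have gf: "g (f x) = x" if "x \<in> I" for x
    using that inj by (simp add: g_def the_inv_into_f_f)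
  have fg: "f (g y) = y" and gJ: "g y \<in> I" if "y \<in> J" for y
    using that fI inj by (auto simp: g_def f_the_inv_into_f the_inv_into_into)
  have cont_f: "continuous_on I f"
    using der by (meson DERIV_isCont continuous_at_imp_continuous_on)
  have J: "open J"
    using invariance_of_domain[OF cont_f I inj] fI by simp
  have cont_g: "continuous_on J g"
    using continuous_on_inverse_open[OF I cont_f _ gf] fI by simp
  have der_g: "(g has_real_derivative inverse (f' (g y))) (at y)" if "y \<in> J" for y
    by (rule has_field_derivative_inverse_basic[where f = f and t = J])
      (use that der gJ nz cont_g J fg in \<open>auto simp: continuous_on_eq_continuous_at\<close>)
  have cont_g': "continuous_on J (\<lambda>y. inverse (f' (g y)))"
    by (intro continuous_on_inverse continuous_on_compose2[OF cont_f' cont_g])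
       (use gJ nz in auto)
  show ?thesis
    unfolding diffeo_onto_def C1_differentiable_on_def g_def[symmetric]
  proof (intro conjI bij)
    show "\<exists>D. (\<forall>x\<in>I. (f has_vector_derivative D x) (at x)) \<and> continuous_on I D"
    proof (intro exI conjI ballI)
      show "(f has_vector_derivative f' x) (at x)" if "x \<in> I" for x
        using der[OF that] by (simp add: has_real_derivative_iff_has_vector_derivative)
    qed (rule cont_f')
    show "\<exists>D. (\<forall>y\<in>J. (g has_vector_derivative D y) (at y)) \<and> continuous_on J D"
    proof (intro exI conjI ballI)
      show "(g has_vector_derivative inverse (f' (g y))) (at y)" if "y \<in> J" for y
        using der_g[OF that] by (simp add: has_real_derivative_iff_has_vector_derivative)
    qed (rule cont_g')
  qed
qed

lemma below_near_zero:
  fixes f :: "real \<Rightarrow> real"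
  assumes "(f \<longlongrightarrow> 0) (at_right 0)" "0 < m" "0 < c"
  obtains e where "0 < e" "e < c" "f e < m"
proof -
  obtain d where d: "0 < d" "\<And>x. 0 < x \<Longrightarrow> x < d \<Longrightarrow> f x < m"
    using order_tendstoD(2)[OF assms(1,2)] by (auto simp: eventually_at_right_field)
  show ?thesis using d assms(3) by (intro that[of "min d c / 2"]) auto
qed

lemma below_near_top:
  fixes f :: "real \<Rightarrow> real"
  assumes "(f \<longlongrightarrow> 0) at_top" "0 < m"
  obtains e where "c < e" "f e < m"
proof -
  obtain d where "\<And>x. d \<le> x \<Longrightarrow> f x < m"
    using order_tendstoD(2)[OF assms] by (auto simp: eventually_at_top_linorder)
  then show ?thesis by (intro that[of "max d c + 1"]) auto
qed

lemma diffeo_increasing_from_zero: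
  fixes f f' :: "real \<Rightarrow> real"
  assumes "0 < b"
    and der: "\<And>x. 0 < x \<Longrightarrow> x \<le> b \<Longrightarrow> (f has_real_derivative f' x) (at x)"
    and cont_f': "continuous_on {0<..<b} f'"
    and f'_pos: "\<And>x. 0 < x \<Longrightarrow> x \<le> b \<Longrightarrow> 0 < f' x"
    and pos: "\<And>x. 0 < x \<Longrightarrow> 0 < f x"
    and lim: "(f \<longlongrightarrow> 0) (at_right 0)"
  shows "diffeo_onto f {0<..<b} {0<..<f b}"
    and "\<forall>x\<in>{0<..<b}. \<forall>y\<in>{0<..<b}. x < y \<longrightarrow> f x < f y"
proof -
  have mono: "f x < f y" if "0 < x" "x < y" "y \<le> b" for x y
  proof (rule DERIV_pos_imp_increasing[OF \<open>x < y\<close>])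
    fix t assume "x \<le> t" "t \<le> y"
    then show "\<exists>D. (f has_real_derivative D) (at t) \<and> 0 < D"
      using that der[of t] f'_pos[of t] by (intro exI[of _ "f' t"]) auto
  qed
  have image: "f ` {0<..<b} = {0<..<f b}"
  proof (intro equalityI subsetI)
    fix y assume "y \<in> f ` {0<..<b}"
    then show "y \<in> {0<..<f b}" using mono pos by auto
  next
    fix y assume y: "y \<in> {0<..<f b}"
    obtain e where e: "0 < e" "e < b" "f e < y"
      using below_near_zero[OF lim _ \<open>0 < b\<close>] y by auto
    have "continuous_on {e..b} f"
      using e der by (intro continuous_at_imp_continuous_on ballI DERIV_isCont[OF der]) auto
    then obtain x where x: "e \<le> x" "x \<le> b" "f x = y"
      using IVT'[of f e y b] e y by auto
    moreover have "x \<noteq> b" using x y by auto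
    ultimately show "y \<in> f ` {0<..<b}" using e by force
  qed
  have "bij_betw f {0<..<b} {0<..<f b}"
    using image mono by (intro bij_betw_imageI inj_onI)
      (metis greaterThanLessThan_iff less_imp_le linorder_neqE_linordered_idom order_less_irrefl)
  then show "diffeo_onto f {0<..<b} {0<..<f b}"
  proof (rule diffeo_onto_if_deriv_nonzero[OF open_greaterThanLessThan _ _ cont_f'])
    show "f' x \<noteq> 0" if "x \<in> {0<..<b}" for x using that f'_pos[of x] by auto
  qed (use der in auto)
  show "\<forall>x\<in>{0<..<b}. \<forall>y\<in>{0<..<b}. x < y \<longrightarrow> f x < f y" using mono by auto
qed

lemma diffeo_decreasing_to_infinity:
  fixes f f' :: "real \<Rightarrow> real"
  assumes der: "\<And>x. a \<le> x \<Longrightarrow> (f has_real_derivative f' x) (at x)"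
    and cont_f': "continuous_on {a<..} f'"
    and f'_neg: "\<And>x. a \<le> x \<Longrightarrow> f' x < 0"
    and pos: "\<And>x. a < x \<Longrightarrow> 0 < f x"
    and lim: "(f \<longlongrightarrow> 0) at_top"
  shows "diffeo_onto f {a<..} {0<..<f a}"
    and "\<forall>x\<in>{a<..}. \<forall>y\<in>{a<..}. x < y \<longrightarrow> f y < f x"
proof -
  have mono: "f y < f x" if "a \<le> x" "x < y" for x y
  proof (rule DERIV_neg_imp_decreasing[OF \<open>x < y\<close>])
    fix t assume "x \<le> t" "t \<le> y"
    then show "\<exists>D. (f has_real_derivative D) (at t) \<and> D < 0"
      using that der[of t] f'_neg[of t] by (intro exI[of _ "f' t"]) auto
  qed
  have image: "f ` {a<..} = {0<..<f a}"
  proof (intro equalityI subsetI)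
    fix y assume "y \<in> f ` {a<..}"
    then show "y \<in> {0<..<f a}" using mono pos by auto
  next
    fix y assume y: "y \<in> {0<..<f a}"
    obtain e where e: "a < e" "f e < y" using below_near_top[OF lim] y by auto
    have "continuous_on {a..e} f"
      using der by (intro continuous_at_imp_continuous_on ballI DERIV_isCont[OF der]) auto
    then obtain x where x: "a \<le> x" "x \<le> e" "f x = y"
      using IVT2'[of f e y a] e y by auto
    moreover have "x \<noteq> a" using x y by auto
    ultimately show "y \<in> f ` {a<..}" by force
  qed
  have "bij_betw f {a<..} {0<..<f a}"
    using image mono by (intro bij_betw_imageI inj_onI)
      (metis greaterThan_iff less_imp_le linorder_neqE_linordered_idom order_less_irrefl)
  then show "diffeo_onto f {a<..} {0<..<f a}"
  proof (rule diffeo_onto_if_deriv_nonzero[OF open_greaterThan _ _ cont_f'])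
    show "f' x \<noteq> 0" if "x \<in> {a<..}" for x using that f'_neg[of x] by auto
  qed (use der in auto)
  show "\<forall>x\<in>{a<..}. \<forall>y\<in>{a<..}. x < y \<longrightarrow> f y < f x" using mono by auto
qed

lemma derivative_sign_regions:
  fixes f f' :: "real \<Rightarrow> real"
  assumes der: "\<And>x. 0 < x \<Longrightarrow> (f has_real_derivative f' x) (at x)"
    and inc: "eventually (\<lambda>x. 0 < f' x) (at_right 0)"
    and dec: "eventually (\<lambda>x. f' x < 0) at_top"
  obtains \<delta> R where "0 < \<delta>" "\<delta> < R"
    "\<And>x. 0 < x \<Longrightarrow> x < \<delta> \<Longrightarrow> 0 < f' x" "\<And>x. R \<le> x \<Longrightarrow> f' x < 0"
    "\<And>x y. 0 < x \<Longrightarrow> x \<le> y \<Longrightarrow> y < \<delta> \<Longrightarrow> f x \<le> f y"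
    "\<And>x y. R \<le> x \<Longrightarrow> x \<le> y \<Longrightarrow> f y \<le> f x"
proof -
  obtain \<delta> where \<delta>: "0 < \<delta>" "\<And>x. 0 < x \<Longrightarrow> x < \<delta> \<Longrightarrow> 0 < f' x"
    using inc by (auto simp: eventually_at_right_field)
  obtain c where c: "\<And>x. c \<le> x \<Longrightarrow> f' x < 0"
    using dec by (auto simp: eventually_at_top_linorder)
  define R where "R = max c \<delta> + 1"
  have R: "\<delta> < R" "\<And>x. R \<le> x \<Longrightarrow> f' x < 0" using c by (auto simp: R_def)
  show ?thesis
  proof (rule that[OF \<delta>(1) R(1) \<delta>(2) R(2)])
    show "f x \<le> f y" if "0 < x" "x \<le> y" "y < \<delta>" for x y
    proof (rule DERIV_nonneg_imp_nondecreasing[OF \<open>x \<le> y\<close>])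
      fix t assume "x \<le> t" "t \<le> y"
      then show "\<exists>D. (f has_real_derivative D) (at t) \<and> 0 \<le> D"
        using that der \<delta>(2)[of t] by (intro exI[of _ "f' t"]) auto
    qed
    show "f y \<le> f x" if "R \<le> x" "x \<le> y" for x y
    proof (rule DERIV_nonpos_imp_nonincreasing[OF \<open>x \<le> y\<close>])
      fix t assume "x \<le> t" "t \<le> y"
      then show "\<exists>D. (f has_real_derivative D) (at t) \<and> D \<le> 0"
        using that der R(2)[of t] \<delta>(1) R(1) by (intro exI[of _ "f' t"]) auto
    qed
  qed
qed

text \<open>Take \<open>m\<close> to be the minimum of \<open>f\<close> on a compact interval \<open>[a, R]\<close>
  bridging the two sign regions, and find \<open>Tm\<close>, \<open>Tp\<close> by the intermediate value theorem.\<close>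
lemma hump_common_level:
  fixes f f' :: "real \<Rightarrow> real"
  assumes der: "\<And>x. 0 < x \<Longrightarrow> (f has_real_derivative f' x) (at x)"
    and pos: "\<And>x. 0 < x \<Longrightarrow> 0 < f x"
    and lim0: "(f \<longlongrightarrow> 0) (at_right 0)" and lim_top: "(f \<longlongrightarrow> 0) at_top"
    and inc: "eventually (\<lambda>x. 0 < f' x) (at_right 0)"
    and dec: "eventually (\<lambda>x. f' x < 0) at_top"
  obtains Tm Tp m where "0 < Tm" "Tm < Tp" "0 < m" "f Tm = m" "f Tp = m"
    "\<And>x. 0 < x \<Longrightarrow> x \<le> Tm \<Longrightarrow> 0 < f' x" "\<And>x. Tp \<le> x \<Longrightarrow> f' x < 0"
    "\<And>x. Tm \<le> x \<Longrightarrow> x \<le> Tp \<Longrightarrow> m \<le> f x"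
proof -
  obtain \<delta> R where \<delta>R: "0 < \<delta>" "\<delta> < R"
    and f'_pos: "\<And>x. 0 < x \<Longrightarrow> x < \<delta> \<Longrightarrow> 0 < f' x" and f'_neg: "\<And>x. R \<le> x \<Longrightarrow> f' x < 0"
    and up: "\<And>x y. 0 < x \<Longrightarrow> x \<le> y \<Longrightarrow> y < \<delta> \<Longrightarrow> f x \<le> f y"
    and down: "\<And>x y. R \<le> x \<Longrightarrow> x \<le> y \<Longrightarrow> f y \<le> f x"
    using derivative_sign_regions[OF der inc dec] by blast
  define a where "a = \<delta> / 2"
  have a: "0 < a" "a < \<delta>" using \<delta>R by (auto simp: a_def)
  have cont: "continuous_on {u..v} f" if "0 < u" for u v
    using that by (intro continuous_at_imp_continuous_on ballI DERIV_isCont[OF der]) auto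
  obtain xm where xm: "a \<le> xm" "xm \<le> R" "\<And>y. a \<le> y \<Longrightarrow> y \<le> R \<Longrightarrow> f xm \<le> f y"
    using continuous_attains_inf[of "{a..R}" f] cont[OF a(1)] a \<delta>R by auto
  define m where "m = f xm"
  have m: "0 < m" using xm a pos by (simp add: m_def)
  obtain e where e: "0 < e" "e < a" "f e < m" using below_near_zero[OF lim0 m a(1)] .
  obtain Tm where Tm: "e \<le> Tm" "Tm \<le> a" "f Tm = m"
    using IVT'[of f e m a] e xm(3)[of a] a \<delta>R cont[OF e(1)] by (auto simp: m_def)
  obtain M where M: "R < M" "f M < m" using below_near_top[OF lim_top m] .
  obtain Tp where Tp: "R \<le> Tp" "Tp \<le> M" "f Tp = m"
    using IVT2'[of f M m R] M xm(3)[of R] a \<delta>R cont[of R M] by (auto simp: m_def)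
  have above: "m \<le> f x" if "Tm \<le> x" "x \<le> Tp" for x
  proof -
    consider "x \<le> a" | "a \<le> x" "x \<le> R" | "R \<le> x" by linarith
    then show ?thesis
    proof cases
      case 1 then show ?thesis using up[of Tm x] that Tm e a by auto
    next
      case 2 then show ?thesis using xm(3) by (simp add: m_def)
    next
      case 3 then show ?thesis using down[of x Tp] that Tp by auto
    qed
  qed
  show ?thesis
    by (rule that[OF _ _ m Tm(3) Tp(3) _ _ above]) (use Tm Tp e a \<delta>R f'_pos f'_neg in auto)
qed

lemma hump_shape:
  fixes f f' :: "real \<Rightarrow> real"
  assumes der: "\<And>x. 0 < x \<Longrightarrow> (f has_real_derivative f' x) (at x)"
    and cont_f': "continuous_on {0<..} f'"
    and pos: "\<And>x. 0 < x \<Longrightarrow> 0 < f x" and f0: "f 0 = 0"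
    and lim0: "(f \<longlongrightarrow> 0) (at_right 0)" and lim_top: "(f \<longlongrightarrow> 0) at_top"
    and inc: "eventually (\<lambda>x. 0 < f' x) (at_right 0)"
    and dec: "eventually (\<lambda>x. f' x < 0) at_top"
  shows "\<exists>Tm Tp m::real. 0 < Tm \<and> Tm < Tp \<and> 0 < m \<and>
     diffeo_onto f {0<..<Tm} {0<..<m} \<and>
     (\<forall>x\<in>{0<..<Tm}. \<forall>y\<in>{0<..<Tm}. x < y \<longrightarrow> f x < f y) \<and>
     diffeo_onto f {Tp<..} {0<..<m} \<and>
     (\<forall>x\<in>{Tp<..}. \<forall>y\<in>{Tp<..}. x < y \<longrightarrow> f y < f x) \<and>
     {r. 0 \<le> r \<and> f r \<in> {0<..<m}} = {0<..<Tm} \<union> {Tp<..}"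
proof -
  obtain Tm Tp m where lev: "0 < Tm" "Tm < Tp" "0 < m" "f Tm = m" "f Tp = m"
    and f'_pos: "\<And>x. 0 < x \<Longrightarrow> x \<le> Tm \<Longrightarrow> 0 < f' x"
    and f'_neg: "\<And>x. Tp \<le> x \<Longrightarrow> f' x < 0"
    and above: "\<And>x. Tm \<le> x \<Longrightarrow> x \<le> Tp \<Longrightarrow> m \<le> f x"
    using hump_common_level[OF der pos lim0 lim_top inc dec] by blast
  have cont_left: "continuous_on {0<..<Tm} f'" and cont_right: "continuous_on {Tp<..} f'"
    using lev(1,2) by (auto intro: continuous_on_subset[OF cont_f'])
  have der_right: "(f has_real_derivative f' x) (at x)" if "Tp \<le> x" for x
    using der that lev(1,2) by auto
  have pos_right: "0 < f x" if "Tp < x" for x using pos that lev(1,2) by auto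
  note left = diffeo_increasing_from_zero[OF lev(1) der cont_left f'_pos pos lim0, unfolded lev(4)]
  note right = diffeo_decreasing_to_infinity[OF der_right cont_right f'_neg pos_right lim_top,
      unfolded lev(5)]
  have level_set: "{r. 0 \<le> r \<and> f r \<in> {0<..<m}} = {0<..<Tm} \<union> {Tp<..}"
  proof (intro equalityI subsetI)
    fix r assume "r \<in> {r. 0 \<le> r \<and> f r \<in> {0<..<m}}"
    then have "0 \<le> r" "r \<noteq> 0" "f r < m" using f0 by auto
    then show "r \<in> {0<..<Tm} \<union> {Tp<..}" using above[of r] by force
  next
    fix r assume "r \<in> {0<..<Tm} \<union> {Tp<..}"
    moreover have "f ` {0<..<Tm} = {0<..<m}" "f ` {Tp<..} = {0<..<m}"
      using left(1) right(1) by (auto simp: diffeo_onto_def bij_betw_def)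
    ultimately show "r \<in> {r. 0 \<le> r \<and> f r \<in> {0<..<m}}" using lev(1,2) by auto
  qed
  show ?thesis using lev(1-3) left right level_set by blast
qed

text \<open>The closed form of \<open>U\<close> is built from \<open>s = rad r = \<surd>(4 + r\<^sup>2)\<close> and
  \<open>arsh r = ln ((r + s) / 2)\<close>, which is \<open>arsinh (r / 2)\<close>.\<close>
definition rad :: "real \<Rightarrow> real" where "rad r = sqrt (4 + r^2)"

definition arsh :: "real \<Rightarrow> real" where "arsh r = ln ((r + rad r) / 2)"

lemma rad_pos: "0 < rad r"
  by (simp add: rad_def add_pos_nonneg)

lemma rad_sq: "rad r ^ 2 = 4 + r^2"
  by (simp add: rad_def add_nonneg_nonneg)

lemma abs_less_rad: "\<bar>r\<bar> < rad r"
  unfolding rad_def by (rule real_less_rsqrt) (simp add: power2_abs)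

text \<open>For \<open>r > 0\<close>, \<open>U r = Ucl r\<close>, \<open>U' r = dUcl r\<close> and \<open>U'' r = d2Ucl r\<close>; the function \<open>kappa\<close>
  is the part of the numerator of \<open>U'\<close> whose sign is not obvious.\<close>
definition kappa :: "real \<Rightarrow> real" where
  "kappa r = 24 * arsh r - 6 * r * rad r + r^3 * rad r"

definition Ucl :: "real \<Rightarrow> real" where
  "Ucl r = (1/9 + (2*r^2 - 4) * (rad r * arsh r - r) / (3*r^3)) / pi"

definition dUcl :: "real \<Rightarrow> real" where
  "dUcl r = 2 * kappa r / (3 * pi * r^4 * rad r)"

definition d2Ucl :: "real \<Rightarrow> real" where
  "d2Ucl r = 2 * (4 * r^5 * rad r - kappa r * (16 + 5*r^2)) / (3 * pi * r^5 * rad r ^ 3)"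

lemma rad_has_deriv: "(rad has_real_derivative r / rad r) (at r within X)"
proof -
  have "((\<lambda>r. sqrt (4 + r^2)) has_real_derivative inverse (sqrt (4 + r^2)) / 2 * (2 * r))
      (at r within X)"
    by (rule DERIV_chain2[where f = sqrt] DERIV_real_sqrt derivative_eq_intros refl
        | simp add: add_pos_nonneg)+
  then show ?thesis unfolding rad_def[abs_def] by (simp add: field_simps)
qed

lemma arsh_has_deriv: "(arsh has_real_derivative 1 / rad r) (at r within X)"
proof -
  have pos: "0 < r + rad r" using abs_less_rad[of r] by linarith
  have "((\<lambda>r. ln ((r + rad r) / 2)) has_real_derivative
      inverse ((r + rad r) / 2) * ((1 + r / rad r) / 2)) (at r within X)"
    by (rule DERIV_chain2[where f = ln] DERIV_ln derivative_eq_intros rad_has_deriv refl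
        | use pos in simp)+
  moreover have "inverse ((r + rad r) / 2) * ((1 + r / rad r) / 2) = 1 / rad r"
  proof -
    have "1 + r / rad r = (r + rad r) / rad r" using rad_pos[of r] by (simp add: field_simps)
    then show ?thesis using pos rad_pos[of r] by (simp add: inverse_eq_divide divide_simps)
  qed
  ultimately show ?thesis unfolding arsh_def[abs_def] by simp
qed

lemma kappa_has_deriv: "(kappa has_real_derivative 4 * r^4 / rad r) (at r within X)"
  unfolding kappa_def[abs_def]
  by (rule derivative_eq_intros rad_has_deriv arsh_has_deriv refl)+
     (use rad_pos[of r] in \<open>simp add: field_simps\<close>, use rad_sq[of r] in algebra)

lemma Ucl_has_deriv:
  assumes "0 < r" shows "(Ucl has_real_derivative dUcl r) (at r within X)"
  unfolding Ucl_def[abs_def] dUcl_def kappa_def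
  by (insert assms rad_pos[of r], (rule derivative_eq_intros rad_has_deriv arsh_has_deriv refl | simp)+)
     (simp add: field_simps, use rad_sq[of r] in algebra)

lemma dUcl_has_deriv:
  assumes "0 < r" shows "(dUcl has_real_derivative d2Ucl r) (at r within X)"
  unfolding dUcl_def[abs_def] d2Ucl_def
  by (insert assms rad_pos[of r], (rule derivative_eq_intros rad_has_deriv kappa_has_deriv refl | simp)+)
     (simp add: field_simps, use rad_sq[of r] in algebra)

text \<open>An antiderivative of the integrand defining \<open>U\<close>, for fixed \<open>r > 0\<close>: polynomial part plus
  a multiple of \<open>ln ((s + r z) / (s - r z))\<close>, obtained by partial fractions with respect to the
  denominator \<open>(4 + r\<^sup>2 - r\<^sup>2 z\<^sup>2) / 4 = (s + r z)(s - r z) / 4\<close>.\<close>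
lemma integrand_antiderivative:
  fixes r z :: real
  assumes r: "0 < r" and z: "0 \<le> z" "z \<le> 1"
  defines "C \<equiv> 2 * (4 + r^2) * (4 - 2*r^2) / (3 * r^5 * rad r)"
  shows "((\<lambda>z. 4*z^3/(9*r^2) + (16 - 8*r^2)*z/(3*r^4) - C * (ln (rad r + r*z) - ln (rad r - r*z)))
     has_real_derivative (z^2 - z^4/3) / (1 + r^2 * (1 - z^2) / 4)) (at z within X)"
proof -
  have rz: "0 \<le> r * z" "r * z \<le> r" using r z by (simp_all add: mult_left_le)
  have "r < rad r" using abs_less_rad[of r] r by simp
  then have p: "0 < rad r + r*z" "0 < rad r - r*z" using r rz by linarith+
  define D where "D = 4 + r^2 - r^2*z^2"
  have D: "0 < D"
  proof -
    have "r^2 * z^2 \<le> r^2" using z by (simp add: mult_left_le power_le_one)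
    then show ?thesis unfolding D_def by linarith
  qed
  have deriv: "((\<lambda>z. 4*z^3/(9*r^2) + (16 - 8*r^2)*z/(3*r^4) - C * (ln (rad r + r*z) - ln (rad r - r*z)))
      has_real_derivative 4*z^2/(3*r^2) + (16 - 8*r^2)/(3*r^4) - C * (r/(rad r + r*z) + r/(rad r - r*z)))
      (at z within X)"
    by (insert r, (rule derivative_eq_intros refl p | simp)+)
       (simp add: field_simps power2_eq_square eval_nat_numeral)
  have partial_fractions: "r/(rad r + r*z) + r/(rad r - r*z) = 2*r*rad r / D"
    using p D unfolding D_def by (simp add: field_simps) (use rad_sq[of r] in algebra)
  have cancel: "C * (2*r*rad r / D) = 4*(4 + r^2)*(4 - 2*r^2) / (3*r^4*D)"
    unfolding C_def using r D rad_pos[of r] by (simp add: field_simps eval_nat_numeral)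
  have simplified: "4*z^2/(3*r^2) + (16 - 8*r^2)/(3*r^4) - 4*(4 + r^2)*(4 - 2*r^2) / (3*r^4*D)
      = 4*(z^2 - z^4/3) / D"
    using r D by (simp add: field_simps) (use D_def in algebra)
  have integrand: "(z^2 - z^4/3) / (1 + r^2 * (1 - z^2) / 4) = 4*(z^2 - z^4/3) / D"
  proof -
    have "1 + r^2 * (1 - z^2) / 4 = D / 4" by (simp add: D_def field_simps)
    then show ?thesis by (simp only:) (simp add: field_simps)
  qed
  show ?thesis using deriv unfolding integrand partial_fractions cancel simplified .
qed

text \<open>At \<open>z = 1\<close> the
  logarithmic term becomes \<open>ln ((s + r) / (s - r)) = 2 arsh r\<close>, since \<open>(s + r)(s - r) = 4\<close>.\<close>
lemma U_eq_Ucl: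
  assumes r: "0 < r" shows "U r = Ucl r"
proof -
  define C where "C = 2 * (4 + r^2) * (4 - 2*r^2) / (3 * r^5 * rad r)"
  define G where "G = (\<lambda>z. 4*z^3/(9*r^2) + (16 - 8*r^2)*z/(3*r^4)
    - C * (ln (rad r + r*z) - ln (rad r - r*z)))"
  have "((\<lambda>z. (z^2 - z^4/3) / (1 + r^2 * (1 - z^2) / 4)) has_integral G 1 - G 0) {0..1}"
  proof (rule fundamental_theorem_of_calculus)
    fix z :: real assume "z \<in> {0..1}"
    then show "(G has_vector_derivative (z^2 - z^4/3) / (1 + r^2 * (1 - z^2) / 4)) (at z within {0..1})"
      unfolding G_def C_def has_real_derivative_iff_has_vector_derivative[symmetric]
      using integrand_antiderivative[OF r] by simp
  qed simp
  then have integral: "integral {0..1} (\<lambda>z. (z^2 - z^4/3) / (1 + r^2 * (1 - z^2) / 4)) = G 1 - G 0"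
    by (rule integral_unique)
  have "r < rad r" using abs_less_rad[of r] r by simp
  then have pos: "0 < rad r + r" "0 < rad r - r" using r by linarith+
  have "(rad r + r) * (rad r - r) = 4" using rad_sq[of r] by algebra
  then have "ln (rad r + r) + ln (rad r - r) = 2 * ln 2"
    using ln_mult_pos[OF pos] ln_realpow[of 2 2] by simp
  moreover have "arsh r = ln (rad r + r) - ln 2"
    unfolding arsh_def using pos by (simp add: ln_divide_pos add.commute)
  ultimately have log_term: "ln (rad r + r) - ln (rad r - r) = 2 * arsh r" by linarith
  have evaluated: "r^2/(4*pi) * (4/(9*r^2) + (16 - 8*r^2)/(3*r^4) - C * (2*A))
      = (1/9 + (2*r^2 - 4) * (rad r * A - r) / (3*r^3)) / pi" for A
    unfolding C_def using r rad_pos[of r] by (simp add: field_simps) (use rad_sq[of r] in algebra)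
  show ?thesis
    unfolding U_def integral Ucl_def using evaluated[of "arsh r"] by (simp add: G_def log_term)
qed

text \<open>The integrand lies in \<open>[0, 1]\<close>, whence \<open>0 \<le> U r \<le> r\<^sup>2 / (4\<pi>)\<close> for all \<open>r\<close>.\<close>
lemma integrand_bounds:
  fixes r z :: real assumes z: "0 \<le> z" "z \<le> 1"
  shows "0 \<le> (z^2 - z^4/3) / (1 + r^2 * (1 - z^2) / 4)"
    and "(z^2 - z^4/3) / (1 + r^2 * (1 - z^2) / 4) \<le> 1"
proof -
  have z2: "0 \<le> z^2" "z^2 \<le> 1" using z by (simp_all add: power_le_one)
  have z4: "z^4 = z^2 * z^2" by algebra
  have "z^2 * z^2 \<le> z^2" "0 \<le> z^2 * z^2" using mult_left_le[OF z2(2,1)] by simp_all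
  then have num: "0 \<le> z^2 - z^4/3" "z^2 - z^4/3 \<le> 1" unfolding z4 using z2 by linarith+
  have den: "1 \<le> 1 + r^2 * (1 - z^2) / 4" using z2 by simp
  show "0 \<le> (z^2 - z^4/3) / (1 + r^2 * (1 - z^2) / 4)" using num den by simp
  show "(z^2 - z^4/3) / (1 + r^2 * (1 - z^2) / 4) \<le> 1" using num den by (simp add: divide_le_eq)
qed

lemma U_bounds: "0 \<le> U r" "U r \<le> r^2 / (4*pi)"
proof -
  let ?f = "\<lambda>z::real. (z^2 - z^4/3) / (1 + r^2 * (1 - z^2) / 4)"
  have "continuous_on {0..1} ?f"
  proof (intro continuous_intros ballI)
    fix z :: real assume "z \<in> {0..1}"
    then have "0 \<le> r^2 * (1 - z^2) / 4" by (simp add: power_le_one)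
    then show "1 + r^2 * (1 - z^2) / 4 \<noteq> 0" by linarith
  qed auto
  then have int: "?f integrable_on {0..1}" by (rule integrable_continuous_interval)
  have "0 \<le> integral {0..1} ?f"
    by (rule integral_nonneg[OF int]) (use integrand_bounds in auto)
  then show "0 \<le> U r" unfolding U_def by simp
  have "integral {0..1} ?f \<le> integral {0..1} (\<lambda>z::real. 1)"
    by (rule integral_le[OF int]) (use integrand_bounds in auto)
  then have "integral {0..1} ?f \<le> 1" by simp
  from mult_left_mono[OF this, of "r^2 / (4*pi)"] show "U r \<le> r^2 / (4*pi)"
    unfolding U_def by simp
qed

text \<open>Since \<open>U = O(r\<^sup>2)\<close> and \<open>U 0 = 0\<close>, \<open>U' 0 = 0\<close> and therefore \<open>\<Phi> 0 = 0\<close>.\<close>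
lemma U_has_deriv_0: "(U has_real_derivative 0) (at 0)"
  unfolding has_field_derivative_iff
proof (rule Lim_null_comparison)
  show "eventually (\<lambda>y. norm ((U y - U 0) / (y - 0)) \<le> \<bar>y\<bar> / (4*pi)) (at 0)"
  proof (rule always_eventually, rule allI)
    fix y :: real
    show "norm ((U y - U 0) / (y - 0)) \<le> \<bar>y\<bar> / (4*pi)"
    proof (cases "y = 0")
      case False
      have "U 0 = 0" by (simp add: U_def)
      then have "norm ((U y - U 0) / (y - 0)) = U y / \<bar>y\<bar>"
        using U_bounds(1)[of y] by simp
      also have "\<dots> \<le> (\<bar>y\<bar> * \<bar>y\<bar> / (4*pi)) / \<bar>y\<bar>"
        by (rule divide_right_mono) (use U_bounds(2)[of y] in \<open>auto simp: power2_eq_square\<close>)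
      also have "\<dots> = \<bar>y\<bar> / (4*pi)"
        using False by (simp add: field_simps del: abs_mult_self_eq)
      finally show ?thesis .
    qed simp
  qed
  show "((\<lambda>y. \<bar>y\<bar> / (4*pi)) \<longlongrightarrow> 0) (at 0)"
    by (intro tendsto_divide_zero tendsto_rabs_zero tendsto_ident_at)
qed

lemma Phi_0: "Phi 0 = 0"
  unfolding Phi_def using DERIV_imp_deriv[OF U_has_deriv_0] by simp

text \<open>\<open>\<kappa> 0 = 0\<close> and \<open>\<kappa>' r = 4 r\<^sup>4 / s > 0\<close>, so \<open>\<kappa>\<close>, and hence \<open>U'\<close>, is positive on
  \<open>(0, \<infinity>)\<close>.\<close>
lemma kappa_pos:
  assumes "0 < r" shows "0 < kappa r"
proof -
  have "kappa 0 < kappa r"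
  proof (rule DERIV_pos_imp_increasing_open[OF assms])
    show "\<exists>y. (kappa has_real_derivative y) (at x) \<and> 0 < y" if "0 < x" for x
      using that kappa_has_deriv[of x] rad_pos[of x] by (intro exI[of _ "4 * x^4 / rad x"]) auto
    show "continuous_on {0..r} kappa"
      by (intro continuous_at_imp_continuous_on ballI DERIV_isCont[OF kappa_has_deriv])
  qed
  then show ?thesis by (simp add: kappa_def arsh_def rad_def)
qed

lemma dUcl_pos: "0 < r \<Longrightarrow> 0 < dUcl r"
  unfolding dUcl_def using kappa_pos[of r] rad_pos[of r] by simp

lemma Ucl_nonneg: "0 < r \<Longrightarrow> 0 \<le> Ucl r"
  using U_eq_Ucl[of r] U_bounds(1)[of r] by simp

lemma Phi_eq:
  assumes r: "0 < r" shows "Phi r = dUcl r / (1 + Ucl r)"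
proof -
  have "(U has_real_derivative dUcl r) (at r)"
    by (rule has_field_derivative_transform_within_open[OF Ucl_has_deriv[OF r] open_greaterThan[of 0]])
       (use r U_eq_Ucl in auto)
  then have "deriv U r = dUcl r" by (rule DERIV_imp_deriv)
  then show ?thesis unfolding Phi_def using U_eq_Ucl[OF r] by simp
qed

definition dPhi :: "real \<Rightarrow> real" where
  "dPhi r = (d2Ucl r * (1 + Ucl r) - dUcl r * dUcl r) / ((1 + Ucl r) * (1 + Ucl r))"

lemma Phi_has_deriv:
  assumes r: "0 < r" shows "(Phi has_real_derivative dPhi r) (at r)"
proof -
  have nz: "1 + Ucl r \<noteq> 0" using Ucl_nonneg[OF r] by linarith
  have "((\<lambda>r. dUcl r / (1 + Ucl r)) has_real_derivative dPhi r) (at r)"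
    using DERIV_divide[OF dUcl_has_deriv[OF r] DERIV_add[OF DERIV_const Ucl_has_deriv[OF r]] nz]
    by (simp add: dPhi_def)
  then show ?thesis
    by (rule has_field_derivative_transform_within_open[OF _ open_greaterThan[of 0]])
       (use r Phi_eq in auto)
qed

lemma dPhi_continuous: "continuous_on {0<..} dPhi"
proof (intro continuous_at_imp_continuous_on ballI)
  fix r :: real assume "r \<in> {0<..}"
  then have r: "0 < r" by simp
  have cont: "isCont rad r" "isCont kappa r" "isCont Ucl r" "isCont dUcl r"
    using DERIV_isCont[OF rad_has_deriv] DERIV_isCont[OF kappa_has_deriv]
      DERIV_isCont[OF Ucl_has_deriv[OF r]] DERIV_isCont[OF dUcl_has_deriv[OF r]] by auto
  have "isCont d2Ucl r"
    unfolding d2Ucl_def[abs_def] using cont r rad_pos[of r] by (intro continuous_intros) auto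
  then show "isCont dPhi r"
    unfolding dPhi_def[abs_def] using cont Ucl_nonneg[OF r]
    by (intro continuous_intros) (auto simp: add_nonneg_eq_0_iff)
qed

lemma Phi_pos: "0 < r \<Longrightarrow> 0 < Phi r"
  using Phi_eq[of r] dUcl_pos[of r] Ucl_nonneg[of r] by simp

lemma Phi_eq_near_0: "eventually (\<lambda>r. dUcl r / (1 + Ucl r) = Phi r) (at_right 0)"
  using eventually_at_right_less[of 0] by eventually_elim (simp add: Phi_eq)

lemma Phi_eq_near_top: "eventually (\<lambda>r. dUcl r / (1 + Ucl r) = Phi r) at_top"
  using eventually_gt_at_top[of 0] by eventually_elim (simp add: Phi_eq)

lemma Ucl_lim_0: "(Ucl \<longlongrightarrow> 0) (at_right 0)"
  unfolding Ucl_def[abs_def] arsh_def rad_def by real_asymp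

lemma dUcl_lim_0: "(dUcl \<longlongrightarrow> 0) (at_right 0)"
  unfolding dUcl_def[abs_def] kappa_def arsh_def rad_def by real_asymp

lemma d2Ucl_lim_0: "(d2Ucl \<longlongrightarrow> 2 / (15 * pi)) (at_right 0)"
  unfolding d2Ucl_def[abs_def] kappa_def arsh_def rad_def by real_asymp (simp add: field_simps)

lemma Ucl_lim_top: "((\<lambda>r. (1 + Ucl r) / ln r) \<longlongrightarrow> 2 / (3 * pi)) at_top"
  unfolding Ucl_def arsh_def rad_def by real_asymp (simp add: field_simps)

lemma dUcl_lim_top: "((\<lambda>r. (r * dUcl r)^2 / ln r) \<longlongrightarrow> 0) at_top"
  unfolding dUcl_def kappa_def arsh_def rad_def by real_asymp

lemma d2Ucl_lim_top: "((\<lambda>r. r^2 * d2Ucl r) \<longlongrightarrow> - 2 / (3 * pi)) at_top"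
  unfolding d2Ucl_def kappa_def arsh_def rad_def by real_asymp (simp add: field_simps)

lemma Phi_asymp_0: "Phi \<sim>[at_right 0] (\<lambda>r. 2 * r / (15 * pi))"
proof -
  have "(\<lambda>r. dUcl r / (1 + Ucl r)) \<sim>[at_right 0] (\<lambda>r. 2 * r / (15 * pi))"
    unfolding Ucl_def dUcl_def kappa_def arsh_def rad_def by real_asymp
  then show ?thesis by (rule asymp_equiv_transfer[OF _ Phi_eq_near_0]) simp
qed

lemma Phi_asymp_top: "Phi \<sim>[at_top] (\<lambda>r. 1 / (r * ln r))"
proof -
  have "(\<lambda>r. dUcl r / (1 + Ucl r)) \<sim>[at_top] (\<lambda>r. 1 / (r * ln r))"
    unfolding Ucl_def dUcl_def kappa_def arsh_def rad_def by real_asymp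
  then show ?thesis by (rule asymp_equiv_transfer[OF _ Phi_eq_near_top]) simp
qed

text \<open>Sign of \<open>\<Phi>'\<close> near the ends: its numerator \<open>d2Ucl (1 + Ucl) - dUcl\<^sup>2\<close> tends to
  \<open>2 / (15\<pi>) > 0\<close> at 0, while \<open>r\<^sup>2 / ln r\<close> times it tends to \<open>-(2 / (3\<pi>))\<^sup>2 < 0\<close> at infinity.\<close>
lemma dPhi_pos_near_0: "eventually (\<lambda>r. 0 < dPhi r) (at_right 0)"
proof -
  have "((\<lambda>r. d2Ucl r * (1 + Ucl r) - dUcl r * dUcl r) \<longlongrightarrow> 2 / (15 * pi) * (1 + 0) - 0 * 0)
      (at_right 0)"
    by (intro tendsto_intros d2Ucl_lim_0 Ucl_lim_0 dUcl_lim_0)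
  then have "eventually (\<lambda>r. 0 < d2Ucl r * (1 + Ucl r) - dUcl r * dUcl r) (at_right 0)"
    by (rule order_tendstoD(1)) simp
  with eventually_at_right_less[of 0] show ?thesis
  proof eventually_elim
    case (elim r)
    then have "0 < (1 + Ucl r) * (1 + Ucl r)" using Ucl_nonneg[of r] by (simp add: add_pos_nonneg)
    with elim show ?case by (simp add: dPhi_def)
  qed
qed

lemma dPhi_neg_near_top: "eventually (\<lambda>r. dPhi r < 0) at_top"
proof -
  have "((\<lambda>r. (r^2 * d2Ucl r) * ((1 + Ucl r) / ln r) - (r * dUcl r)^2 / ln r) \<longlongrightarrow>
      - 2 / (3 * pi) * (2 / (3 * pi)) - 0) at_top"
    by (intro tendsto_intros d2Ucl_lim_top Ucl_lim_top dUcl_lim_top)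
  then have "eventually (\<lambda>r. (r^2 * d2Ucl r) * ((1 + Ucl r) / ln r) - (r * dUcl r)^2 / ln r < 0) at_top"
    by (rule order_tendstoD(2)) simp
  with eventually_gt_at_top[of 1] show ?thesis
  proof eventually_elim
    case (elim r)
    then have "0 < ln r" by simp
    then have pos: "0 < r^2 / ln r" using elim(1) by simp
    have eq: "(r^2 * d2Ucl r) * ((1 + Ucl r) / ln r) - (r * dUcl r)^2 / ln r
        = r^2 / ln r * (d2Ucl r * (1 + Ucl r) - dUcl r * dUcl r)"
      using \<open>0 < ln r\<close> by (simp add: field_simps power2_eq_square)
    have "r^2 / ln r * (d2Ucl r * (1 + Ucl r) - dUcl r * dUcl r) < r^2 / ln r * 0"
      using elim(2) unfolding eq by simp
    then have "d2Ucl r * (1 + Ucl r) - dUcl r * dUcl r < 0"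
      by (rule mult_less_cancel_left_pos[OF pos, THEN iffD1])
    moreover have "0 < (1 + Ucl r) * (1 + Ucl r)" using Ucl_nonneg[of r] elim(1) by (simp add: add_pos_nonneg)
    ultimately show ?case by (simp add: dPhi_def divide_neg_pos)
  qed
qed

theorem lemma9:
  shows "\<exists>Tm Tp Phi0::real. 0 < Tm \<and> Tm < Tp \<and> 0 < Phi0 \<and>
     diffeo_onto Phi {0<..<Tm} {0<..<Phi0} \<and>
     (\<forall>x\<in>{0<..<Tm}. \<forall>y\<in>{0<..<Tm}. x < y \<longrightarrow> Phi x < Phi y) \<and>
     diffeo_onto Phi {Tp<..} {0<..<Phi0} \<and>
     (\<forall>x\<in>{Tp<..}. \<forall>y\<in>{Tp<..}. x < y \<longrightarrow> Phi y < Phi x) \<and>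
     {r. 0 \<le> r \<and> Phi r \<in> {0<..<Phi0}} = {0<..<Tm} \<union> {Tp<..} \<and>
     Phi \<sim>[at_right 0] (\<lambda>r. 2 * r / (15 * pi)) \<and>
     Phi \<sim>[at_top] (\<lambda>r. 1 / (r * ln r))"
proof -
  have lim_0: "(Phi \<longlongrightarrow> 0) (at_right 0)"
    using Phi_asymp_0 by (rule tendsto_asymp_equiv_cong[THEN iffD2]) real_asymp
  have lim_top: "(Phi \<longlongrightarrow> 0) at_top"
    using Phi_asymp_top by (rule tendsto_asymp_equiv_cong[THEN iffD2]) real_asymp
  from hump_shape[OF Phi_has_deriv dPhi_continuous Phi_pos Phi_0 lim_0 lim_top
      dPhi_pos_near_0 dPhi_neg_near_top]
  show ?thesis using Phi_asymp_0 Phi_asymp_top by blast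
qed

end
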